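(* Let $B=\sum_{j=1}^{k-1}B_jz^{-j-1}dz\in O_B$ and suppose that for some $i\in\{1,\dots,k-1\}$ we have $B_{k-j}\in\mathfrak{h}_{k-j}$ for all $1\le j\le i$. Then $B_{k-j}=(dT)_{k-j}$ for all $1\le j\le i$.
   Context: Let $\mathfrak{g}=\mathfrak{gl}_n(\mathbb{C})$, $\mathfrak{t}$ a Cartan subalgebra, $k>1$, $T=\sum_{i=1}^{k-1}T_iz^{-i}$, $T_i\in\mathfrak{t}$, $T_{k-1}\ne0$, $dT=\sum_{i=1}^{k-1}(dT)_iz^{-i-1}dz$ with $(dT)_i=-iT_i$. $B_k=\{\sum_{i=0}^{k-1}b_iz^i:b_0=1\}\subset\mathrm{GL}_n(\mathbb{C}[z]/(z^k))$; $\mathfrak{b}_k^*=\{\sum_{i=1}^{k-1}X_iz^{-i-1}dz\}$ via $\mathrm{res}_{z=0}\mathrm{tr}$; coadjoint action $\mathrm{Ad}^*_bB$ = part of $bBb^{-1}$ in degrees $z^{-i-1}dz$, $1\le i\le k-1$; $O_B$ is the $B_k$-orbit of $dT$. $\mathfrak{h}_i=\bigcap_{j=i+1}^{k-1}\ker\mathrm{ad}_{T_j}$ for $0\le i\le k-2$ and $\mathfrak{h}_{k-1}=\mathfrak{g}$. *)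

theory Defs
  imports "HOL-Analysis.Analysis"
begin

text \<open>gl_n(C) is modelled as complex^'n^'n. A truncated series sum b_i z^i
  (and a dual element sum X_i z^(-i-1) dz) is a function nat => matrix;
  only the indices relevant for the given k are ever used.\<close>

type_synonym 'n mat = "complex^'n^'n"

definition dT :: "(nat \<Rightarrow> 'n::finite mat) \<Rightarrow> nat \<Rightarrow> 'n mat" where
  "dT T i = (\<chi> a b. - of_nat i * (T i $ a $ b))"

text \<open>All T_1..T_(k-1) lie in a common Cartan subalgebra of gl_n(C), i.e. they
  are simultaneously diagonalisable (every Cartan subalgebra of gl_n is a conjugate
  of the diagonal matrices).\<close>
definition in_common_cartan :: "nat \<Rightarrow> (nat \<Rightarrow> 'n::finite mat) \<Rightarrow> bool" where
  "in_common_cartan k T \<longleftrightarrow> (\<exists>P::'n mat. invertible P \<and>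
      (\<forall>i\<in>{1..k-1}. \<forall>a b. a \<noteq> b \<longrightarrow> (matrix_inv P ** T i ** P) $ a $ b = 0))"

text \<open>c is the inverse of b in GL_n(C[z]/(z^k)).\<close>
definition trunc_inverse :: "nat \<Rightarrow> (nat \<Rightarrow> 'n::finite mat) \<Rightarrow> (nat \<Rightarrow> 'n mat) \<Rightarrow> bool" where
  "trunc_inverse k b c \<longleftrightarrow>
     (\<forall>m<k. (\<Sum>j\<le>m. b j ** c (m - j)) = (if m = 0 then mat 1 else 0))"

text \<open>Coefficient of z^(-i-1) dz in b X b^(-1), where c = b^(-1).\<close>
definition coadj :: "nat \<Rightarrow> (nat \<Rightarrow> 'n::finite mat) \<Rightarrow> (nat \<Rightarrow> 'n mat) \<Rightarrow> (nat \<Rightarrow> 'n mat) \<Rightarrow> nat \<Rightarrow> 'n mat" where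
  "coadj k b c X i = (\<Sum>p\<le>k-1. \<Sum>q\<le>k-1. if i + p + q \<le> k - 1 then b p ** X (i + p + q) ** c q else 0)"

definition in_orbit :: "nat \<Rightarrow> (nat \<Rightarrow> 'n::finite mat) \<Rightarrow> (nat \<Rightarrow> 'n mat) \<Rightarrow> bool" where
  "in_orbit k T B \<longleftrightarrow> (\<exists>b c. b 0 = mat 1 \<and> trunc_inverse k b c \<and>
      (\<forall>i\<in>{1..k-1}. B i = coadj k b c (dT T) i))"

text \<open>h_i = intersection over j = i+1..k-1 of ker ad_(T_j); for i = k-1 the
  intersection is empty, giving all of gl_n, as in the paper.\<close>
definition hsub :: "nat \<Rightarrow> (nat \<Rightarrow> 'n::finite mat) \<Rightarrow> nat \<Rightarrow> 'n mat set" where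
  "hsub k T i = {X. \<forall>j. i < j \<and> j \<le> k - 1 \<longrightarrow> T j ** X - X ** T j = 0}"

end

theory Submission
  imports Defs
begin

text \<open>Comparing coefficients in
  B b = b (dT), and using B_l = (dT)_l for all l > m, the coefficient of z^(-m-1) dz gives
  B_m - (dT)_m = sum over s >= 1 of [b_s, (dT)_(m+s)], a sum of commutators with the T_l, l > m.
  Both B_m (lying in h_m) and (dT)_m commute with these T_l, and for simultaneously
  diagonalisable matrices the common centraliser meets the sum of the images of the ad T_l
  only in 0. Hence B_m = (dT)_m, and downward induction on m gives the claim.\<close>

lemma matrix_mult_sum_left:
  "(\<Sum>i\<in>A. f i) ** (X :: 'a::comm_semiring_1^'n::finite^'m::finite) = (\<Sum>i\<in>A. f i ** X)"
  by (induction A rule: infinite_finite_induct)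
    (auto simp: vec_eq_iff matrix_matrix_mult_def sum_distrib_right sum.distrib algebra_simps)

lemma matrix_mult_sum_right:
  "(X :: 'a::comm_semiring_1^'n::finite^'m::finite) ** (\<Sum>i\<in>A. f i) = (\<Sum>i\<in>A. X ** f i)"
  by (induction A rule: infinite_finite_induct)
    (auto simp: vec_eq_iff matrix_matrix_mult_def sum_distrib_left sum.distrib algebra_simps)

lemma matrix_diff_ldistrib: "(A :: 'a::comm_ring_1^'n^'m) ** (B - C) = A ** B - A ** C"
  by (simp add: vec_eq_iff matrix_matrix_mult_def sum_subtractf algebra_simps)

lemma matrix_diff_rdistrib: "(A - B) ** (C :: 'a::comm_ring_1^'n^'m) = A ** C - B ** C"
  by (simp add: vec_eq_iff matrix_matrix_mult_def sum_subtractf algebra_simps)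

lemma invertible_matrix_inv:
  assumes "invertible P"
  shows "P ** matrix_inv P = mat 1" and "matrix_inv P ** P = mat 1"
proof -
  have "\<exists>P'. P ** P' = mat 1 \<and> P' ** P = mat 1"
    using assms unfolding invertible_def by blast
  then have "P ** matrix_inv P = mat 1 \<and> matrix_inv P ** P = mat 1"
    unfolding matrix_inv_def by (rule someI_ex)
  then show "P ** matrix_inv P = mat 1" and "matrix_inv P ** P = mat 1" by auto
qed

lemma conj_matrix_mult:
  assumes "invertible P"
  shows "matrix_inv P ** (X ** Y) ** P = (matrix_inv P ** X ** P) ** (matrix_inv P ** Y ** P)"
  by (simp add: matrix_mul_assoc invertible_matrix_inv[OF assms] flip: matrix_mul_assoc[of _ P])

lemma conj_matrix_inj:
  assumes "invertible P" and "matrix_inv P ** X ** P = matrix_inv P ** Y ** P"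
  shows "X = Y"
proof -
  have "P ** (matrix_inv P ** X ** P) ** matrix_inv P = X" for X
    by (simp add: matrix_mul_assoc invertible_matrix_inv[OF assms(1)] flip: matrix_mul_assoc[of _ P])
  then show ?thesis using assms(2) by metis
qed

definition diagonal :: "'a::zero^'n^'n \<Rightarrow> bool" where
  "diagonal M \<longleftrightarrow> (\<forall>a b. a \<noteq> b \<longrightarrow> M $ a $ b = 0)"

lemma diagonal_mult_left_component:
  assumes "diagonal M"
  shows "(M ** (X :: 'a::comm_semiring_1^'m^'n::finite)) $ a $ e = M $ a $ a * X $ a $ e"
proof -
  have "(M ** X) $ a $ e = (\<Sum>f\<in>UNIV. M $ a $ f * X $ f $ e)"
    by (simp add: matrix_matrix_mult_def)
  also have "\<dots> = (\<Sum>f\<in>UNIV. if f = a then M $ a $ a * X $ a $ e else 0)"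
    using assms by (intro sum.cong) (auto simp: diagonal_def)
  finally show ?thesis by simp
qed

lemma diagonal_mult_right_component:
  assumes "diagonal M"
  shows "((X :: 'a::comm_semiring_1^'n::finite^'m) ** M) $ a $ e = X $ a $ e * M $ e $ e"
proof -
  have "(X ** M) $ a $ e = (\<Sum>f\<in>UNIV. X $ a $ f * M $ f $ e)"
    by (simp add: matrix_matrix_mult_def)
  also have "\<dots> = (\<Sum>f\<in>UNIV. if f = e then X $ a $ e * M $ e $ e else 0)"
    using assms by (intro sum.cong) (auto simp: diagonal_def)
  finally show ?thesis by simp
qed

lemma diagonal_commute:
  fixes A B :: "'a::comm_semiring_1^'n::finite^'n"
  assumes "diagonal A" and "diagonal B"
  shows "A ** B = B ** A"
proof -
  have "(A ** B) $ a $ e = (B ** A) $ a $ e" for a e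
    using assms by (cases "a = e")
      (auto simp: diagonal_mult_left_component diagonal_mult_right_component diagonal_def mult.commute)
  then show ?thesis by (simp add: vec_eq_iff)
qed

lemma commutator_sum_commuting_diagonal_eq_0:
  fixes X :: "'a::idom^'n::finite^'n"
  assumes diag: "\<forall>l\<in>L. diagonal (S l)"
    and comm: "\<forall>l\<in>L. S l ** X = X ** S l"
    and X: "X = (\<Sum>l\<in>L. Y l ** S l - S l ** Y l)"
  shows "X = 0"
proof -
  have "X $ a $ e = 0" for a e
  proof (cases "\<forall>l\<in>L. S l $ a $ a = S l $ e $ e")
    case True
    have "X $ a $ e = (\<Sum>l\<in>L. Y l $ a $ e * S l $ e $ e - S l $ a $ a * Y l $ a $ e)"
      using diag by (subst X) (simp add: sum_component diagonal_mult_left_component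
          diagonal_mult_right_component)
    also have "\<dots> = 0"
      using True by (simp add: mult.commute)
    finally show ?thesis .
  next
    case False
    then obtain l where "l \<in> L" and "S l $ a $ a \<noteq> S l $ e $ e" by blast
    moreover have "S l $ a $ a * X $ a $ e = X $ a $ e * S l $ e $ e"
      using comm diag \<open>l \<in> L\<close> by (metis diagonal_mult_left_component diagonal_mult_right_component)
    ultimately show ?thesis by (metis mult.commute mult_cancel_left)
  qed
  then show ?thesis by (simp add: vec_eq_iff)
qed

lemma commutator_sum_commuting_diagonalisable_eq_0:
  fixes X :: "'a::field^'n::finite^'n"
  assumes P: "invertible P"
    and diag: "\<forall>l\<in>L. diagonal (matrix_inv P ** S l ** P)"
    and comm: "\<forall>l\<in>L. S l ** X = X ** S l"
    and X: "X = (\<Sum>l\<in>L. Y l ** S l - S l ** Y l)"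
  shows "X = 0"
proof -
  let ?conj = "\<lambda>M. matrix_inv P ** M ** P"
  have "?conj X = (\<Sum>l\<in>L. ?conj (Y l) ** ?conj (S l) - ?conj (S l) ** ?conj (Y l))"
    by (subst X) (simp add: matrix_mult_sum_left matrix_mult_sum_right matrix_diff_ldistrib
        matrix_diff_rdistrib conj_matrix_mult[OF P])
  moreover have "\<forall>l\<in>L. ?conj (S l) ** ?conj X = ?conj X ** ?conj (S l)"
    using comm by (simp flip: conj_matrix_mult[OF P])
  ultimately have "?conj X = ?conj 0"
    using commutator_sum_commuting_diagonal_eq_0[OF diag] by simp
  then show ?thesis using conj_matrix_inj[OF P] by blast
qed

lemma diagonalisable_commute:
  fixes A B :: "'a::field^'n::finite^'n"
  assumes P: "invertible P"
    and "diagonal (matrix_inv P ** A ** P)" and "diagonal (matrix_inv P ** B ** P)"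
  shows "A ** B = B ** A"
  using assms by (intro conj_matrix_inj[OF P]) (simp add: conj_matrix_mult[OF P] diagonal_commute)

lemma dT_eq_scaleR: "dT T i = (- real i) *\<^sub>R T i"
  by (simp add: dT_def vec_eq_iff) (simp add: scaleR_conv_of_real)

lemma dT_commute:
  assumes "T i ** X = X ** T i"
  shows "dT T i ** X = X ** dT T i"
  unfolding dT_eq_scaleR by (metis assms matrix_scalar_ac scalar_matrix_assoc)

lemma diagonal_conj_dT:
  assumes "diagonal (Q ** T i ** P)"
  shows "diagonal (Q ** dT T i ** P)"
proof -
  have "Q ** dT T i ** P = (- real i) *\<^sub>R (Q ** T i ** P)"
    unfolding dT_eq_scaleR by (metis matrix_scalar_ac scalar_matrix_assoc)
  then show ?thesis using assms by (simp add: diagonal_def)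
qed

definition trunc_series :: "nat \<Rightarrow> (nat \<Rightarrow> 'a::zero) \<Rightarrow> nat \<Rightarrow> 'a" where
  "trunc_series K D l = (if l \<le> K then D l else 0)"

lemma coadj_eq_0: "k - 1 < i \<Longrightarrow> coadj k b c X i = 0"
  unfolding coadj_def by simp

lemma trunc_inverse_coeff_0:
  assumes "trunc_inverse k b c" and "b 0 = mat 1" and "0 < k"
  shows "c 0 = mat 1"
proof -
  have "(\<Sum>j\<le>0. b j ** c (0 - j)) = mat 1"
    using assms(1,3) unfolding trunc_inverse_def by auto
  then show ?thesis using assms(2) by simp
qed

lemma sum_atMost_split_0: "(\<Sum>q\<le>(K::nat). f q) = f 0 + (\<Sum>q\<in>{1..K}. f q)"
proof -
  have "{..K} = insert 0 {1..K}" by auto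
  then show ?thesis by simp
qed

lemma coadj_eq_sum:
  "coadj k b c D n = (\<Sum>q\<le>k-1. (\<Sum>p\<le>k-1. b p ** trunc_series (k-1) D (n+q+p)) ** c q)"
proof -
  have "coadj k b c D n = (\<Sum>p\<le>k-1. \<Sum>q\<le>k-1. b p ** trunc_series (k-1) D (n+q+p) ** c q)"
    unfolding coadj_def trunc_series_def by (intro sum.cong refl) (auto simp: add_ac)
  also have "\<dots> = (\<Sum>q\<le>k-1. \<Sum>p\<le>k-1. b p ** trunc_series (k-1) D (n+q+p) ** c q)"
    by (rule sum.swap)
  finally show ?thesis by (simp add: matrix_mult_sum_left)
qed

lemma trunc_inverse_convolution:
  assumes inv: "trunc_inverse k b c" and "0 < k"
    and F: "\<forall>l. k - 1 < l \<longrightarrow> F l = 0"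
  shows "(\<Sum>q\<le>k-1. (\<Sum>r\<le>k-1. F (n+q+r) ** b r) ** c q) = F n"
proof -
  define K where "K = k - 1"
  define G where "G r q = F (n+r+q) ** b r ** c q" for r q
  have "(\<Sum>q\<le>K. (\<Sum>r\<le>K. F (n+q+r) ** b r) ** c q) = (\<Sum>q\<le>K. \<Sum>r\<le>K. G r q)"
    by (simp add: G_def matrix_mult_sum_left add_ac)
  also have "\<dots> = (\<Sum>(r,q)\<in>{..K}\<times>{..K}. G r q)"
    by (subst sum.swap) (simp add: sum.cartesian_product)
  also have "\<dots> = (\<Sum>(r,q)\<in>{(r,q). r+q \<le> K}. G r q)"
  proof (rule sum.mono_neutral_right)
    have "G r q = 0" if "\<not> r + q \<le> K" for r q
      using F that by (simp add: G_def K_def)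
    then show "\<forall>x\<in>{..K}\<times>{..K} - {(r,q). r+q \<le> K}. (case x of (r,q) \<Rightarrow> G r q) = 0"
      by auto
  qed auto
  also have "\<dots> = (\<Sum>s\<le>K. \<Sum>r\<le>s. G r (s - r))"
    by (rule sum.triangle_reindex_eq)
  also have "\<dots> = (\<Sum>s\<le>K. F (n+s) ** (\<Sum>r\<le>s. b r ** c (s - r)))"
    by (intro sum.cong refl) (simp add: G_def matrix_mult_sum_right matrix_mul_assoc)
  also have "\<dots> = (\<Sum>s\<le>K. F (n+s) ** (if s = 0 then mat 1 else 0))"
    using inv \<open>0 < k\<close> by (intro sum.cong refl) (simp add: trunc_inverse_def K_def)
  also have "\<dots> = F n"
    by (simp add: if_distrib cong: if_cong)
  finally show ?thesis unfolding K_def .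
qed

text \<open>Only the right inverse b c = 1 is given, so rather than using c b = 1 the identity is
  proved by downward induction on n.\<close>

lemma coadj_intertwining:
  assumes inv: "trunc_inverse k b c" and b0: "b 0 = mat 1" and k: "0 < k"
  shows "(\<Sum>s\<le>k-1. coadj k b c D (n+s) ** b s) = (\<Sum>p\<le>k-1. b p ** trunc_series (k-1) D (n+p))"
proof (induction "k - n" arbitrary: n rule: less_induct)
  case less
  define K where "K = k - 1"
  define A where "A = coadj k b c D"
  define X where "X m = (\<Sum>s\<le>K. A (m+s) ** b s)" for m
  define Y where "Y m = (\<Sum>p\<le>K. b p ** trunc_series K D (m+p))" for m
  have A_above: "\<forall>l. k - 1 < l \<longrightarrow> A l = 0"
    by (simp add: A_def coadj_eq_0)
  have "X n = Y n"
  proof (cases "n < k")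
    case False
    then have "A (n+s) = 0" and "trunc_series K D (n+s) = 0" for s
      using A_above k by (simp_all add: trunc_series_def K_def)
    then show ?thesis by (simp add: X_def Y_def)
  next
    case True
    have IH: "Y (n+q) = X (n+q)" if "1 \<le> q" for q
      using less[of "n+q"] True that by (simp add: X_def Y_def A_def K_def add.assoc)
    have c0: "c 0 = mat 1"
      using trunc_inverse_coeff_0[OF inv b0 k] .
    have "A n = (\<Sum>q\<le>K. Y (n+q) ** c q)"
      by (simp add: A_def Y_def K_def coadj_eq_sum add.assoc)
    also have "\<dots> = Y n + (\<Sum>q\<in>{1..K}. X (n+q) ** c q)"
      by (simp add: sum_atMost_split_0[of _ K] c0 IH)
    finally have "A n = Y n + (\<Sum>q\<in>{1..K}. X (n+q) ** c q)" .
    moreover have "(\<Sum>q\<le>K. X (n+q) ** c q) = A n"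
      using trunc_inverse_convolution[OF inv k A_above, of n]
      by (simp add: X_def K_def add.assoc)
    then have "A n = X n + (\<Sum>q\<in>{1..K}. X (n+q) ** c q)"
      by (simp add: sum_atMost_split_0[of _ K] c0)
    ultimately show ?thesis by simp
  qed
  then show ?case by (simp add: X_def Y_def A_def K_def)
qed

lemma orbit_coeff_eq_dT:
  fixes T B :: "nat \<Rightarrow> complex^'n::finite^'n"
  assumes cartan: "in_common_cartan k T" and orbit: "in_orbit k T B"
    and m: "1 \<le> m" "m \<le> k - 1"
    and above: "\<forall>l. m < l \<and> l \<le> k - 1 \<longrightarrow> B l = dT T l"
    and h: "B m \<in> hsub k T m"
  shows "B m = dT T m"
proof -
  define K where "K = k - 1"
  define E where "E = trunc_series K (dT T)"
  obtain b c where b0: "b 0 = mat 1" and inv: "trunc_inverse k b c"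
    and orb: "\<forall>i\<in>{1..K}. B i = coadj k b c (dT T) i"
    using orbit unfolding in_orbit_def K_def by (elim exE conjE) simp
  obtain P :: "'n mat" where P: "invertible P"
    and diagT: "\<forall>l\<in>{1..K}. diagonal (matrix_inv P ** T l ** P)"
    using cartan unfolding in_common_cartan_def diagonal_def K_def by (elim exE conjE) simp
  have k: "0 < k" using m by simp
  have diagE: "diagonal (matrix_inv P ** E l ** P)" if "1 \<le> l" for l
  proof (cases "l \<le> K")
    case True
    then show ?thesis using diagT that by (simp add: E_def trunc_series_def diagonal_conj_dT)
  qed (simp add: E_def trunc_series_def diagonal_def)
  have coadj_above: "coadj k b c (dT T) (m+s) = E (m+s)" if "1 \<le> s" for s
  proof (cases "m + s \<le> K")
    case True
    then show ?thesis using orb above that m by (simp add: E_def trunc_series_def K_def)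
  qed (simp add: E_def trunc_series_def K_def coadj_eq_0)
  have Bm: "coadj k b c (dT T) m = B m" and Em: "E m = dT T m"
    using orb m by (simp_all add: E_def trunc_series_def K_def)
  have "(\<Sum>s\<le>K. coadj k b c (dT T) (m+s) ** b s) = (\<Sum>p\<le>K. b p ** E (m+p))"
    using coadj_intertwining[OF inv b0 k] by (simp add: E_def K_def)
  then have "B m + (\<Sum>s\<in>{1..K}. E (m+s) ** b s) = dT T m + (\<Sum>s\<in>{1..K}. b s ** E (m+s))"
    unfolding sum_atMost_split_0[of _ K] using coadj_above by (simp add: b0 Bm Em)
  then have X: "B m - dT T m = (\<Sum>s\<in>{1..K}. b s ** E (m+s) - E (m+s) ** b s)"
    unfolding sum_subtractf by (simp add: algebra_simps)
  have comm: "\<forall>s\<in>{1..K}. E (m+s) ** (B m - dT T m) = (B m - dT T m) ** E (m+s)"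
  proof
    fix s assume s: "s \<in> {1..K}"
    show "E (m+s) ** (B m - dT T m) = (B m - dT T m) ** E (m+s)"
    proof (cases "m + s \<le> K")
      case True
      have "dT T (m+s) ** dT T m = dT T m ** dT T (m+s)"
        using diagT m s True by (intro diagonalisable_commute[OF P] diagonal_conj_dT) auto
      moreover have "T (m+s) ** B m = B m ** T (m+s)"
        using h s True unfolding hsub_def K_def by auto
      then have "dT T (m+s) ** B m = B m ** dT T (m+s)"
        by (rule dT_commute)
      ultimately show ?thesis
        using True by (simp add: E_def trunc_series_def matrix_diff_ldistrib matrix_diff_rdistrib)
    qed (simp add: E_def trunc_series_def)
  qed
  show ?thesis
    using commutator_sum_commuting_diagonalisable_eq_0[OF P _ comm X] diagE by simp
qed

theorem lemma3p12:
  fixes T B :: "nat \<Rightarrow> complex^'n::finite^'n" and k i :: nat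
  assumes "k > 1"
    and "in_common_cartan k T"
    and "T (k - 1) \<noteq> 0"
    and "in_orbit k T B"
    and "1 \<le> i" and "i \<le> k - 1"
    and "\<forall>j\<in>{1..i}. B (k - j) \<in> hsub k T (k - j)"
  shows "\<forall>j\<in>{1..i}. B (k - j) = dT T (k - j)"
proof -
  have "B (k - j) = dT T (k - j)" if "j \<in> {1..i}" for j
    using that
  proof (induction j rule: less_induct)
    case (less j)
    have "B l = dT T l" if "k - j < l" and "l \<le> k - 1" for l
      using less.IH[of "k - l"] less.prems that by auto
    moreover have "1 \<le> k - j" and "k - j \<le> k - 1" and "B (k - j) \<in> hsub k T (k - j)"
      using less.prems assms(6,7) by auto
    ultimately show ?case
      using orbit_coeff_eq_dT[OF assms(2,4)] by blast
  qed
  then show ?thesis by blast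
qed

end
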